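(* Let $\Sigma=I_d$, $\beta_*\in\mathbb{R}^d$, $\sigma^2\ge0$, $\lambda>0$, and let $\lambda_*>0$ be the solution of $n-\lambda/\lambda_*=\frac{d}{1+\lambda_*}$. Define $$\mathsf{R}_\lambda:=\frac{\lambda_*^2\langle\beta_*,\Sigma(\Sigma+\lambda_*I)^{-2}\beta_*\rangle}{1-n^{-1}\operatorname{Tr}(\Sigma^2(\Sigma+\lambda_*I)^{-2})}+\frac{\sigma^2\operatorname{Tr}(\Sigma^2(\Sigma+\lambda_*I)^{-2})}{n-\operatorname{Tr}(\Sigma^2(\Sigma+\lambda_*I)^{-2})},$$ $$\mathsf{N}_\lambda:=\langle\beta_*,\Sigma^2(\Sigma+\lambda_*I)^{-2}\beta_*\rangle+\frac{\operatorname{Tr}(\Sigma(\Sigma+\lambda_*I)^{-2})}{n}\cdot\frac{\lambda_*^2\langle\beta_*,\Sigma(\Sigma+\lambda_*I)^{-2}\beta_*\rangle}{1-n^{-1}\operatorname{Tr}(\Sigma^2(\Sigma+\lambda_*I)^{-2})}+\frac{\sigma^2\operatorname{Tr}(\Sigma(\Sigma+\lambda_*I)^{-2})}{n-\operatorname{Tr}(\Sigma^2(\Sigma+\lambda_*I)^{-2})}.$$ Then $$\big(\|\beta_*\|_2^2-\mathsf{R}_\lambda-\mathsf{N}_\lambda\big)\big(\|\beta_*\|_2^2+\mathsf{R}_\lambda-\mathsf{N}_\lambda\big)^2d+2\|\beta_*\|_2^2\Big(\big(\|\beta_*\|_2^2+\mathsf{R}_\lambda-\mathsf{N}_\lamb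da\big)^2-4\|\beta_*\|_2^2\mathsf{R}_\lambda\Big)\lambda=2\Big(\big(\mathsf{R}_\lambda-\mathsf{N}_\lambda\big)^2-\|\beta_*\|_2^4\Big)d\sigma^2.$$
   Context: $\mathsf{R}_\lambda$ and $\mathsf{N}_\lambda$ are the deterministic equivalents of the test risk $\mathbb{E}_\varepsilon\|\beta_*-\hat\beta\|_\Sigma^2$ and the squared norm $\mathbb{E}_\varepsilon\|\hat\beta\|_2^2$ of the ridge estimator $\hat\beta=(X^{\top}X+\lambda I)^{-1}X^{\top}y$ in linear regression with $n$ samples, feature covariance $\Sigma$, target $\beta_*$ and noise variance $\sigma^2$; they are defined by the formulas in the claim. *)

theory Defs
  imports "HOL-Analysis.Analysis"
begin

definition res2 :: "real^'d^'d \<Rightarrow> real \<Rightarrow> real^'d^'d" where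
  "res2 Sig ls = matrix_inv (Sig + ls *\<^sub>R mat 1) ** matrix_inv (Sig + ls *\<^sub>R mat 1)"

definition R_lam :: "real^'d^'d \<Rightarrow> real^'d \<Rightarrow> real \<Rightarrow> nat \<Rightarrow> real \<Rightarrow> real" where
  "R_lam Sig b s2 n ls =
     ls\<^sup>2 * (b \<bullet> ((Sig ** res2 Sig ls) *v b))
       / (1 - trace (Sig ** Sig ** res2 Sig ls) / real n)
     + s2 * trace (Sig ** Sig ** res2 Sig ls)
       / (real n - trace (Sig ** Sig ** res2 Sig ls))"

definition N_lam :: "real^'d^'d \<Rightarrow> real^'d \<Rightarrow> real \<Rightarrow> nat \<Rightarrow> real \<Rightarrow> real" where
  "N_lam Sig b s2 n ls =
     b \<bullet> ((Sig ** Sig ** res2 Sig ls) *v b)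
     + trace (Sig ** res2 Sig ls) / real n
       * (ls\<^sup>2 * (b \<bullet> ((Sig ** res2 Sig ls) *v b))
          / (1 - trace (Sig ** Sig ** res2 Sig ls) / real n))
     + s2 * trace (Sig ** res2 Sig ls)
       / (real n - trace (Sig ** Sig ** res2 Sig ls))"

end

theory Submission
  imports Defs
begin

text \<open>For \<open>\<Sigma> = I\<close> every matrix in the deterministic equivalents is the scalar matrix
  \<open>(1 + \<lambda>\<^sub>*)\<^sup>-\<^sup>2 I\<close>, so with \<open>t = \<lambda>\<^sub>*\<close>, \<open>B = \<parallel>\<beta>\<^sub>*\<parallel>\<^sup>2\<close> and \<open>D = n (1 + t)\<^sup>2 - d\<close> they collapse to
  \<open>R = (t\<^sup>2 B n + d \<sigma>\<^sup>2) / D\<close> and \<open>R - N = B (t - 1) / (1 + t)\<close>; in particular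
  \<open>B + R - N = 2 B t / (1 + t)\<close>. Writing the fixed-point equation as \<open>\<lambda> (1 + t) = t (n (1 + t) - d)\<close>,
  the difference of the two sides of the claimed relation becomes
  \<open>8 B\<^sup>2 t (t\<^sup>2 B n + d \<sigma>\<^sup>2 - R D) / (1 + t)\<^sup>2\<close>, which vanishes.\<close>

lemma matrix_inv_eqI:
  fixes A B :: "'a::semiring_1^'n^'n"
  assumes "A ** B = mat 1" and "B ** A = mat 1"
  shows "matrix_inv A = B"
proof -
  let ?A' = "matrix_inv A"
  have "A ** ?A' = mat 1 \<and> ?A' ** A = mat 1"
    unfolding matrix_inv_def by (rule someI[where x = B]) (use assms in simp)
  then have "?A' = (B ** A) ** ?A'" and "B = B ** (A ** ?A')"
    using assms by simp_all
  then show ?thesis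
    by (simp add: matrix_mul_assoc)
qed

lemma mat_mult_mat: "(mat a :: 'a::semiring_1^'n^'n) ** mat b = mat (a * b)"
  by (simp add: matrix_matrix_mult_def mat_def vec_eq_iff if_distrib[of "\<lambda>x. x * _"] cong: if_cong)

lemma matrix_inv_mat:
  assumes "c \<noteq> 0"
  shows "matrix_inv (mat c :: 'a::field^'n^'n) = mat (inverse c)"
  using assms by (intro matrix_inv_eqI) (simp_all add: mat_mult_mat)

lemma trace_mat: "trace (mat c :: 'a::semiring_1^'n^'n) = of_nat CARD('n) * c"
  by (simp add: trace_def mat_def)

lemma inner_mat_mult: "(x::real^'n) \<bullet> (mat c *v x) = c * (norm x)\<^sup>2"
proof -
  have "mat c *v x = c *\<^sub>R x"
    by (simp add: matrix_vector_mult_def mat_def vec_eq_iff if_distrib[of "\<lambda>x. x * _"]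
        cong: if_cong)
  then show ?thesis
    by (simp add: power2_norm_eq_inner)
qed

lemma res2_mat_1:
  assumes "ls \<noteq> -1"
  shows "res2 (mat 1 :: real^'n^'n) ls = mat (inverse ((1 + ls)\<^sup>2))"
proof -
  have "mat 1 + ls *\<^sub>R mat 1 = (mat (1 + ls) :: real^'n^'n)"
    by (simp add: mat_def vec_eq_iff)
  moreover have "1 + ls \<noteq> 0"
    using assms by linarith
  ultimately show ?thesis
    by (simp add: res2_def matrix_inv_mat mat_mult_mat power2_eq_square)
qed

lemma R_lam_N_lam_mat_1:
  fixes b :: "real^'d"
  assumes "ls \<noteq> -1"
  defines "r \<equiv> inverse ((1 + ls)\<^sup>2)"
  defines "df \<equiv> real CARD('d) * r"
  shows "R_lam (mat 1) b s n ls = ls\<^sup>2 * r * (norm b)\<^sup>2 / (1 - df / n) + s * df / (n - df)"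
    and "N_lam (mat 1) b s n ls
           = r * (norm b)\<^sup>2 + df / n * (ls\<^sup>2 * r * (norm b)\<^sup>2 / (1 - df / n)) + s * df / (n - df)"
  unfolding R_lam_def N_lam_def res2_mat_1[OF assms(1)] r_def df_def
  by (simp_all add: trace_mat inner_mat_mult mult.assoc)

lemma R_lam_mat_1:
  fixes b :: "real^'d"
  assumes "ls \<noteq> -1" and "n > 0" and "real n * (1 + ls)\<^sup>2 \<noteq> real CARD('d)"
  shows "R_lam (mat 1) b s n ls * (real n * (1 + ls)\<^sup>2 - real CARD('d))
           = ls\<^sup>2 * (norm b)\<^sup>2 * real n + real CARD('d) * s"
proof -
  define r where "r = inverse ((1 + ls)\<^sup>2)"
  define D where "D = real n * (1 + ls)\<^sup>2 - real CARD('d)"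
  have r: "r * (1 + ls)\<^sup>2 = 1"
    using assms(1) unfolding r_def by (simp add: add_eq_0_iff)
  have "real n - real CARD('d) * r = r * D"
    unfolding D_def using r by algebra
  moreover have "r \<noteq> 0" "D \<noteq> 0"
    using r assms(3) unfolding D_def by auto
  ultimately show ?thesis
    using assms(2) unfolding R_lam_N_lam_mat_1(1)[OF assms(1)] r_def[symmetric] D_def[symmetric]
    by (simp add: field_simps)
qed

lemma R_lam_minus_N_lam_mat_1:
  fixes b :: "real^'d"
  assumes "ls \<noteq> -1" and "n > 0" and "real n * (1 + ls)\<^sup>2 \<noteq> real CARD('d)"
  shows "(R_lam (mat 1) b s n ls - N_lam (mat 1) b s n ls) * (1 + ls) = (norm b)\<^sup>2 * (ls - 1)"
proof -
  define r where "r = inverse ((1 + ls)\<^sup>2)"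
  have r: "r * (1 + ls)\<^sup>2 = 1"
    using assms(1) unfolding r_def by (simp add: add_eq_0_iff)
  define q where "q = 1 - real CARD('d) * r / real n"
  have q: "q \<noteq> 0"
    using r assms(2,3) unfolding q_def by (auto simp: field_simps)
  have df: "real CARD('d) * r / real n = 1 - q"
    unfolding q_def by simp
  have "R_lam (mat 1) b s n ls - N_lam (mat 1) b s n ls = (ls\<^sup>2 - 1) * r * (norm b)\<^sup>2"
    using q unfolding R_lam_N_lam_mat_1[OF assms(1)] r_def[symmetric] q_def[symmetric] df
    by (simp add: field_simps)
  then show ?thesis
    using r by algebra
qed

lemma ridge_fixed_point_consequences:
  fixes n d lam t :: real
  assumes "t > 0" and "lam > 0" and "d \<ge> 0" and "n - lam / t = d / (1 + t)"
  shows "n * (1 + t)\<^sup>2 > d" and "lam * (1 + t) = t * (n * (1 + t) - d)"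
proof -
  show lam_eq: "lam * (1 + t) = t * (n * (1 + t) - d)"
    using assms(1,4) by (simp add: field_simps)
  have "0 < t * (n * (1 + t) - d)"
    unfolding lam_eq[symmetric] using assms(1,2) by simp
  then have "d < n * (1 + t)"
    using assms(1) by (simp add: zero_less_mult_iff)
  also have "\<dots> \<le> n * (1 + t) * (1 + t)"
    using calculation assms(1,3) by (simp add: mult_le_cancel_left1)
  finally show "n * (1 + t)\<^sup>2 > d"
    by (simp add: power2_eq_square mult.assoc)
qed

lemma cubic_relation_from_closed_forms:
  fixes B R N d s lam t n :: real
  assumes "1 + t \<noteq> 0"
    and "(R - N) * (1 + t) = B * (t - 1)"
    and "R * (n * (1 + t)\<^sup>2 - d) = t\<^sup>2 * B * n + d * s"
    and "lam * (1 + t) = t * (n * (1 + t) - d)"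
  shows "(B - R - N) * (B + R - N)\<^sup>2 * d + 2 * B * ((B + R - N)\<^sup>2 - 4 * B * R) * lam
           = 2 * ((R - N)\<^sup>2 - B\<^sup>2) * d * s"
  using assms by algebra

theorem proposition12:
  fixes Sig :: "real^'d^'d" and b :: "real^'d"
    and s2 lam ls :: real and n :: nat
  assumes "Sig = mat 1"
    and "s2 \<ge> 0"
    and "lam > 0"
    and "ls > 0"
    and "real n - lam / ls = real CARD('d) / (1 + ls)"
  shows "(let d = real CARD('d); B = (norm b)\<^sup>2;
              R = R_lam Sig b s2 n ls; N = N_lam Sig b s2 n ls
          in (B - R - N) * (B + R - N)\<^sup>2 * d
             + 2 * B * ((B + R - N)\<^sup>2 - 4 * B * R) * lam
           = 2 * ((R - N)\<^sup>2 - B\<^sup>2) * d * s2)"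
proof -
  have ls: "ls \<noteq> -1" "1 + ls \<noteq> 0"
    using assms(4) by linarith+
  note fixed_point = ridge_fixed_point_consequences[OF assms(4,3) of_nat_0_le_iff assms(5)]
  have "0 < real n * (1 + ls)\<^sup>2"
    using fixed_point(1) by (rule le_less_trans[OF of_nat_0_le_iff])
  then have n: "n > 0" "real n * (1 + ls)\<^sup>2 \<noteq> real CARD('d)"
    using fixed_point(1) by (simp_all add: zero_less_mult_iff)
  show ?thesis
    unfolding Let_def assms(1)
    by (rule cubic_relation_from_closed_forms[OF ls(2) R_lam_minus_N_lam_mat_1[OF ls(1) n]
          R_lam_mat_1[OF ls(1) n] fixed_point(2)])
qed

end
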